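(* Let $t>0$, $0<t_{sc}<t$, $t_{ave}>0$, $c>0$, $d\in(0,1)$, and let $\Gamma:[0,1]\to(0,\infty)$ satisfy $\Gamma(d)>c$. Let $\eta$, $\zeta$ and $\Delta\pi$ be the transmission efficiency, service integrity and cooperation margin defined in the context. Then $$\Delta\pi=1-\frac{d}{(1-\zeta)\,(1-c/\Gamma(d))},$$ $$\Delta\pi=1-\frac{1-(1-d)\exp\!\left(-\frac{t_{sc}}{t_{ave}}\frac{1}{1-\eta}\right)}{1-c/\Gamma(d)},$$ $$\zeta=1-\frac{d}{1-(1-d)\exp\!\left(-\frac{t_{sc}}{t_{ave}}\frac{1}{1-\eta}\right)}.$$
   Context: The transmission efficiency is $\eta=1-t_{sc}/t$. Service integrity: the service duration $T$ is exponentially distributed with mean $t_{ave}$, and the number of rounds is $M=\lceil T/t\rceil$. The service integrity is $$\zeta=\sum_{m=1}^\infty(1-d)^m\Pr(M=m).$$ Cooperation margin: - The continuation probability is $w=\exp(-t/t_{ave})$. - The trial time $\tau\in(0,t)$ and price $p$ satisfy $p=\Gamma(d)(1-\tau/t)+\frac{c}{1-d}\frac{\tau}{t}$. - The SP's long-term payoffs against a cooperating client are $$\Pi_s^{\mathrm{C}}=\frac{(1-d)(p-c)t-dc\tau}{1-(1-d)w}$$ when the SP cooperates, and $$\Pi_s^{\mathrm{D}}=(1-d)pt-c\tau$$ when the SP always defects. - The cooperation margin is $\Delta\pi=1-\Pi_s^{\mathrm D}/\Pi_s^{\mathrm C}$. *)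

theory Defs
  imports "HOL-Probability.Probability"
begin

definition trans_eff :: "real \<Rightarrow> real \<Rightarrow> real" where
  "trans_eff t_sc t = 1 - t_sc / t"

text \<open>Service integrity: T a random variable on probability space Om (service duration),
  M = ceiling (T / t) the number of rounds, zeta = sum over m >= 1 of (1-d)^m Pr(M = m).\<close>
definition service_integrity :: "'a measure \<Rightarrow> ('a \<Rightarrow> real) \<Rightarrow> real \<Rightarrow> real \<Rightarrow> real" where
  "service_integrity Om T t d =
     (\<Sum>k. (1 - d) ^ (Suc k) * measure Om {\<omega> \<in> space Om. \<lceil>T \<omega> / t\<rceil> = int (Suc k)})"

definition cont_prob :: "real \<Rightarrow> real \<Rightarrow> real" where
  "cont_prob t t_ave = exp (- t / t_ave)"

definition payoff_C :: "real \<Rightarrow> real \<Rightarrow> real \<Rightarrow> real \<Rightarrow> real \<Rightarrow> real \<Rightarrow> real" where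
  "payoff_C d p c t \<tau> w = ((1 - d) * (p - c) * t - d * c * \<tau>) / (1 - (1 - d) * w)"

definition payoff_D :: "real \<Rightarrow> real \<Rightarrow> real \<Rightarrow> real \<Rightarrow> real \<Rightarrow> real" where
  "payoff_D d p c t \<tau> = (1 - d) * p * t - c * \<tau>"

definition coop_margin :: "real \<Rightarrow> real \<Rightarrow> real \<Rightarrow> real \<Rightarrow> real \<Rightarrow> real \<Rightarrow> real" where
  "coop_margin d p c t \<tau> t_ave =
     1 - payoff_D d p c t \<tau> / payoff_C d p c t \<tau> (cont_prob t t_ave)"

end

theory Submission
  imports Defs
begin

text \<open>By memorylessness the number of rounds M is geometric: Pr(M = k + 1) = w^k - w^(k+1)
  with w = exp(-t/t_ave), so the service integrity is a geometric series summing to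
  1 - d / (1 - (1 - d) w). The pricing rule makes both payoffs multiples of (1 - d)(t - \<tau>),
  namely \<Gamma>(d) times it for defection and (\<Gamma>(d) - c) / (1 - (1 - d) w) times it for cooperation,
  which gives the cooperation margin. Finally t_sc / (1 - \<eta>) = t, so the exponential
  appearing in the statement is w.\<close>

lemma prob_ceiling_div_exponential:
  fixes t l :: real and T :: "'a \<Rightarrow> real" and Om :: "'a measure"
  assumes "prob_space Om" and D: "distributed Om lborel T (exponential_density l)"
    and "t > 0" and "l > 0"
  shows "measure Om {\<omega> \<in> space Om. \<lceil>T \<omega> / t\<rceil> = int (Suc k)}
         = exp (- t * l) ^ k - exp (- t * l) ^ Suc k"
proof -
  interpret prob_space Om by fact
  have [measurable]: "T \<in> borel_measurable Om" using distributed_measurable[OF D] by simp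
  define A where "A = {\<omega> \<in> space Om. real k * t < T \<omega>}"
  define B where "B = {\<omega> \<in> space Om. real (Suc k) * t < T \<omega>}"
  have "\<lceil>x / t\<rceil> = int (Suc k) \<longleftrightarrow> real k * t < x \<and> \<not> real (Suc k) * t < x"
    for x
  proof -
    have "\<lceil>x / t\<rceil> = int (Suc k) \<longleftrightarrow> real (Suc k) - 1 < x / t \<and> x / t \<le> real (Suc k)"
      by (simp add: ceiling_eq_iff)
    also have "\<dots> \<longleftrightarrow> real k * t < x \<and> \<not> real (Suc k) * t < x"
      using \<open>t > 0\<close> by (simp add: field_simps not_less)
    finally show ?thesis .
  qed
  then have "{\<omega> \<in> space Om. \<lceil>T \<omega> / t\<rceil> = int (Suc k)} = A - B"
    unfolding A_def B_def by auto
  moreover have "B \<subseteq> A"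
    unfolding A_def B_def using \<open>t > 0\<close> by (auto intro: less_trans[rotated])
  moreover have "A \<in> events" "B \<in> events" unfolding A_def B_def by measurable
  moreover have "prob A = exp (- (real k * t) * l)" "prob B = exp (- (real (Suc k) * t) * l)"
    unfolding A_def B_def using exponential_distributedD_gt[OF D _ \<open>l > 0\<close>] \<open>t > 0\<close> by simp_all
  ultimately show ?thesis
    by (simp add: finite_measure_Diff exp_of_nat_mult[symmetric] mult_exp_exp algebra_simps)
qed

lemma discounted_cont_prob_less_1:
  assumes "t > 0" and "t_ave > 0" and "0 \<le> d" and "d \<le> 1"
  shows "\<bar>(1 - d) * cont_prob t t_ave\<bar> < 1"
proof -
  have "0 < cont_prob t t_ave" "cont_prob t t_ave < 1"
    using assms unfolding cont_prob_def by auto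
  moreover have "\<bar>1 - d\<bar> * cont_prob t t_ave \<le> cont_prob t t_ave"
    using calculation assms by (intro mult_left_le_one_le) auto
  ultimately have "\<bar>1 - d\<bar> * cont_prob t t_ave < 1" by linarith
  with \<open>0 < cont_prob t t_ave\<close> show ?thesis by (simp add: abs_mult)
qed

lemma service_integrity_exponential:
  fixes t t_ave d :: real and T :: "'a \<Rightarrow> real" and Om :: "'a measure"
  assumes "prob_space Om" and "distributed Om lborel T (exponential_density (1 / t_ave))"
    and "t > 0" and "t_ave > 0" and "0 \<le> d" and "d \<le> 1"
  shows "service_integrity Om T t d = 1 - d / (1 - (1 - d) * cont_prob t t_ave)"
proof -
  define w where "w = cont_prob t t_ave"
  have q: "norm ((1 - d) * w) < 1"
    using discounted_cont_prob_less_1 assms unfolding w_def by simp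
  have rounds: "measure Om {\<omega> \<in> space Om. \<lceil>T \<omega> / t\<rceil> = int (Suc k)} = w ^ k - w ^ Suc k"
    for k
    using prob_ceiling_div_exponential[OF assms(1,2,3)] assms
    unfolding w_def cont_prob_def by simp
  have "(\<lambda>k. (1 - d) ^ Suc k * measure Om {\<omega> \<in> space Om. \<lceil>T \<omega> / t\<rceil> = int (Suc k)})
      = (\<lambda>k. ((1 - d) * (1 - w)) * ((1 - d) * w) ^ k)"
    unfolding rounds power_mult_distrib power_Suc by (simp add: algebra_simps)
  moreover have "(\<lambda>k. ((1 - d) * (1 - w)) * ((1 - d) * w) ^ k)
      sums ((1 - d) * (1 - w) * (1 / (1 - (1 - d) * w)))"
    by (rule sums_mult[OF geometric_sums[OF q]])
  ultimately have "service_integrity Om T t d = (1 - d) * (1 - w) / (1 - (1 - d) * w)"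
    unfolding service_integrity_def by (simp add: sums_iff)
  also have "\<dots> = 1 - d / (1 - (1 - d) * w)"
    using q by (simp add: field_simps)
  finally show ?thesis unfolding w_def .
qed

lemma exp_trans_eff_eq_cont_prob:
  assumes "t_sc \<noteq> 0"
  shows "exp (- (t_sc / t_ave) * (1 / (1 - trans_eff t_sc t))) = cont_prob t t_ave"
  using assms unfolding trans_eff_def cont_prob_def by simp

context
  fixes d p c t \<tau> G :: real
  assumes price: "p = G * (1 - \<tau> / t) + c / (1 - d) * (\<tau> / t)"
    and "t \<noteq> 0" and "d \<noteq> 1"
begin

lemma payoff_D_price: "payoff_D d p c t \<tau> = G * ((1 - d) * (t - \<tau>))"
  using \<open>t \<noteq> 0\<close> \<open>d \<noteq> 1\<close> unfolding payoff_D_def price by (simp add: field_simps)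

lemma payoff_C_price:
  "payoff_C d p c t \<tau> w = (G - c) * ((1 - d) * (t - \<tau>)) / (1 - (1 - d) * w)"
proof -
  have "(1 - d) * (p - c) * t - d * c * \<tau> = (G - c) * ((1 - d) * (t - \<tau>))"
    using \<open>t \<noteq> 0\<close> \<open>d \<noteq> 1\<close> unfolding price by (simp add: field_simps)
  then show ?thesis unfolding payoff_C_def by simp
qed

lemma coop_margin_price:
  assumes "\<tau> \<noteq> t" and "G \<noteq> 0" and "G \<noteq> c" and "1 - (1 - d) * cont_prob t t_ave \<noteq> 0"
  shows "coop_margin d p c t \<tau> t_ave = 1 - (1 - (1 - d) * cont_prob t t_ave) / (1 - c / G)"
proof -
  define K where "K = (1 - d) * (t - \<tau>)"
  define D where "D = 1 - (1 - d) * cont_prob t t_ave"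
  have "K \<noteq> 0" "D \<noteq> 0" using assms \<open>d \<noteq> 1\<close> unfolding K_def D_def by simp_all
  have "payoff_D d p c t \<tau> / payoff_C d p c t \<tau> (cont_prob t t_ave) = G * K / ((G - c) * K / D)"
    unfolding payoff_D_price payoff_C_price K_def D_def ..
  also have "\<dots> = D / (1 - c / G)"
    using \<open>K \<noteq> 0\<close> \<open>D \<noteq> 0\<close> assms by (simp add: field_simps)
  finally show ?thesis unfolding coop_margin_def D_def by simp
qed

end

theorem theorem4:
  fixes t t_sc t_ave c d \<tau> p :: real
    and \<Gamma> :: "real \<Rightarrow> real"
    and Om :: "'a measure" and T :: "'a \<Rightarrow> real"
  assumes "t > 0" and "0 < t_sc" and "t_sc < t" and "t_ave > 0" and "c > 0"
    and "0 < d" and "d < 1"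
    and "\<forall>x \<in> {0..1}. \<Gamma> x > 0" and "\<Gamma> d > c"
    and "prob_space Om"
    and "distributed Om lborel T (exponential_density (1 / t_ave))"
    and "0 < \<tau>" and "\<tau> < t"
    and "p = \<Gamma> d * (1 - \<tau> / t) + c / (1 - d) * (\<tau> / t)"
  shows "coop_margin d p c t \<tau> t_ave
           = 1 - d / ((1 - service_integrity Om T t d) * (1 - c / \<Gamma> d)) \<and>
         coop_margin d p c t \<tau> t_ave
           = 1 - (1 - (1 - d) * exp (- (t_sc / t_ave) * (1 / (1 - trans_eff t_sc t))))
                 / (1 - c / \<Gamma> d) \<and>
         service_integrity Om T t d
           = 1 - d / (1 - (1 - d) * exp (- (t_sc / t_ave) * (1 / (1 - trans_eff t_sc t))))"
proof -
  define w where "w = cont_prob t t_ave"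
  have den: "1 - (1 - d) * w > 0"
    using discounted_cont_prob_less_1[of t t_ave d] assms unfolding w_def by simp
  have zeta: "service_integrity Om T t d = 1 - d / (1 - (1 - d) * w)"
    using service_integrity_exponential[OF assms(10,11,1,4)] assms unfolding w_def by simp
  have margin: "coop_margin d p c t \<tau> t_ave = 1 - (1 - (1 - d) * w) / (1 - c / \<Gamma> d)"
    using coop_margin_price[OF assms(14)] den assms unfolding w_def by simp
  have "d / (1 - service_integrity Om T t d) = 1 - (1 - d) * w"
    unfolding zeta using den \<open>0 < d\<close> by simp
  then have "d / ((1 - service_integrity Om T t d) * (1 - c / \<Gamma> d))
      = (1 - (1 - d) * w) / (1 - c / \<Gamma> d)"
    by (simp add: divide_divide_eq_left[symmetric])
  with margin zeta show ?thesis
    using exp_trans_eff_eq_cont_prob[of t_sc t_ave t] assms unfolding w_def by simp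
qed

end
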